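(* Let $M$ be the All Attack Structure for a plant $G$, observable events $\Sigma_o$, supervisor $S$ realized by $H$, vulnerable events $\Sigma_v$, and secret initial states $X_{sec}\subseteq X_0$. If $q_e$ is an undetectable environment state of $M$, then every environment state of $M$ reachable from $q_e$ is either undetectable or a negative detected state.
   Context: A plant is a finite automaton $G=(X,\Sigma,\delta,X_0)$ with partial transition function $\delta$ (extended to strings) and initial states $X_0\subseteq X$; $\Sigma=\Sigma_o\dot\cup\Sigma_{uo}$. A supervisor $S$ is realized by a deterministic automaton $H=(Z,\Sigma,\xi,z_0)$ (its control decision after a string leading $H$ to $z$ is $\Delta_H(z)$, the set of events defined at $z$; only observable events change the state of $H$). $\Sigma_v\subseteq\Sigma_o$ are vulnerable events and $X_{sec}\subseteq X_0$ secret initial states. Operators: for $q\subseteq X$, $\gamma\subseteq\Sigma$, $\sigma\in\Sigma_o$: $\textsf{UR}_\gamma(q)=\{\delta(x,s):x\in q,s\in(\Sigma_{uo}\cap\gamma)^*\}$, $\textsf{NX}_\sigma(q)=\{\delta(x,\sigma):x\in q\}$, $\textsf{NX}_\epsilon(q)=q$, $\mathcal{O}(q,\gamma)=\{\sigma\in\Sigma_o\cap\gamma:\exists x\in q,\exists w\in(\Sigma_{uo}\cap\gamma)^*,\delta(x,w\sigma)\text{ defined}\}$. Augmented system: states $\tilde X\subseteq X_0\times X$, $\tilde X_0=\{(x_0,x_0):x_0\in X_0\}$, $\tilde\delta((x_0,x),\sigma)=(x_0,\delta(x,\sigma))$; $\widetilde{\textsf{UR}},\widetilde{\textsf{NX}},\mathcal{O}(\tilde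 q,\gamma)$ defined analogously. $I(\tilde q)=\{x_0:(x_0,x)\in\tilde q\text{ for some }x\}$. All Attack Structure: for $\sigma\in\Sigma_o$, $\hat\sigma$ is a doctored copy, $\hat\epsilon$ an erasure symbol; $\mathcal{V}(\sigma)=\{\hat\sigma':\sigma'\in\Sigma_v\}\cup\{\hat\epsilon\}$ if $\sigma\in\Sigma_v$, else $\{\hat\sigma\}$. $M=(Q,\Sigma_M,f,q_0)$, $q_0=(X_0,\tilde X_0,z_0)$, states reachable from $q_0$, $Q=Q_e\dot\cup Q_a$: environment states $(q,\tilde q,z)$ with $q\subseteq X,\tilde q\subseteq\tilde X,z\in Z\cup\{z_{\textsf{att}}\}$ ($z_{\textsf{att}}$ new, $\Delta_H(z_{\textsf{att}})=\emptyset$); attack states $(q,\tilde q,z,\sigma)$. At $(q,\tilde q,z)$ enabled events are $\mathcal{O}(\tilde q,\Delta_H(z))$ if $z\in Z$, none if $z=z_{\textsf{att}}$, with $f((q,\tilde q,z),\sigma)=(q,\tilde q,z,\sigma)$. At $(q,\tilde q,z,\sigma)$ enabled events are $\mathcal{V}(\sigma)$, with $f((q,\tilde q,z,\sigma),\hat\sigma_a)=(q',\tilde q',z')$, $q'=\textsf{NX}_{\sigma_a}(\textsf{UR}_{\Delta_H(z)}(q))$, $\tilde q'=\widetilde{\textsf{NX}}_\sigma(\widetilde{\textsf{UR}}_{\Delta_H(z)}(\tilde q))$, $z'=\xi(z,\sigma_a)$ if $q'\ne\emptyset$ (with $\xi(z,\epsilon)=z$), $z'=z_{\textsf{att}}$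 otherwise. An environment state $(q,\tilde q,z)$ is a negative detected state if $I(\tilde q)\cap X_{sec}=\emptyset$. It is undetectable if (i) $I(\tilde q)\cap X_{sec}\neq\emptyset$, and (ii) for every $(x_0,x)\in\widetilde{\textsf{UR}}_{\Delta_H(z)}(\tilde q)$ with $x_0\in X_{sec}$ there exists $(x_0',x)\in\widetilde{\textsf{UR}}_{\Delta_H(z)}(\tilde q)$ with $x_0'\notin X_{sec}$. *)

theory Defs
  imports Main
begin

fun dstar :: "('s \<Rightarrow> 'e \<Rightarrow> 's option) \<Rightarrow> 's \<Rightarrow> 'e list \<Rightarrow> 's option" where
  "dstar d x [] = Some x"
| "dstar d x (e # s) = (case d x e of None \<Rightarrow> None | Some y \<Rightarrow> dstar d y s)"

definition plant :: "'x set \<Rightarrow> 'e set \<Rightarrow> ('x \<Rightarrow> 'e \<Rightarrow> 'x option) \<Rightarrow> 'x set \<Rightarrow> bool" where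
  "plant X Sig d X0 \<longleftrightarrow> finite X \<and> finite Sig \<and> X0 \<subseteq> X \<and>
     (\<forall>x e y. d x e = Some y \<longrightarrow> x \<in> X \<and> e \<in> Sig \<and> y \<in> X)"

definition supervisor_aut :: "'z set \<Rightarrow> 'e set \<Rightarrow> 'e set \<Rightarrow> ('z \<Rightarrow> 'e \<Rightarrow> 'z option) \<Rightarrow> 'z \<Rightarrow> bool" where
  "supervisor_aut Z Sig Suo xi z0 \<longleftrightarrow> finite Z \<and> z0 \<in> Z \<and>
     (\<forall>z e z'. xi z e = Some z' \<longrightarrow> z \<in> Z \<and> e \<in> Sig \<and> z' \<in> Z) \<and>
     (\<forall>z e z'. e \<in> Suo \<longrightarrow> xi z e = Some z' \<longrightarrow> z' = z)"

text \<open>Control decision; \<open>None\<close> plays the role of \<open>z_att\<close>, with empty decision.\<close>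
definition DeltaH :: "('z \<Rightarrow> 'e \<Rightarrow> 'z option) \<Rightarrow> 'z option \<Rightarrow> 'e set" where
  "DeltaH xi z = (case z of None \<Rightarrow> {} | Some zz \<Rightarrow> {e. xi zz e \<noteq> None})"

definition UR :: "'e set \<Rightarrow> ('s \<Rightarrow> 'e \<Rightarrow> 's option) \<Rightarrow> 'e set \<Rightarrow> 's set \<Rightarrow> 's set" where
  "UR Suo d \<gamma> q = {y. \<exists>x\<in>q. \<exists>s. set s \<subseteq> Suo \<inter> \<gamma> \<and> dstar d x s = Some y}"

text \<open>\<open>NX d None\<close> is \<open>NX_\<epsilon>\<close>.\<close>
definition NX :: "('s \<Rightarrow> 'e \<Rightarrow> 's option) \<Rightarrow> 'e option \<Rightarrow> 's set \<Rightarrow> 's set" where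
  "NX d a q = (case a of None \<Rightarrow> q | Some e \<Rightarrow> {y. \<exists>x\<in>q. d x e = Some y})"

definition Obs :: "'e set \<Rightarrow> 'e set \<Rightarrow> ('s \<Rightarrow> 'e \<Rightarrow> 's option) \<Rightarrow> 's set \<Rightarrow> 'e set \<Rightarrow> 'e set" where
  "Obs So Suo d q \<gamma> = {e \<in> So \<inter> \<gamma>. \<exists>x\<in>q. \<exists>w. set w \<subseteq> Suo \<inter> \<gamma> \<and> dstar d x (w @ [e]) \<noteq> None}"

text \<open>Augmented system on \<open>X0 \<times> X\<close>.\<close>
definition aug :: "('x \<Rightarrow> 'e \<Rightarrow> 'x option) \<Rightarrow> ('x \<times> 'x) \<Rightarrow> 'e \<Rightarrow> ('x \<times> 'x) option" where
  "aug d p e = map_option (\<lambda>y. (fst p, y)) (d (snd p) e)"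

definition Iinit :: "('x \<times> 'x) set \<Rightarrow> 'x set" where
  "Iinit qt = fst ` qt"

text \<open>Attack symbols: \<open>Hat (Some \<sigma>)\<close> is the doctored copy of \<sigma>, \<open>Hat None\<close> is the erasure.\<close>
datatype 'e mlabel = Ev 'e | Hat "'e option"

datatype ('x, 'e, 'z) mstate =
    EnvS "'x set" "('x \<times> 'x) set" "'z option"
  | AttS "'x set" "('x \<times> 'x) set" "'z option" 'e

definition Vset :: "'e set \<Rightarrow> 'e \<Rightarrow> 'e option set" where
  "Vset Sv e = (if e \<in> Sv then Some ` Sv \<union> {None} else {Some e})"

definition xi_ext :: "('z \<Rightarrow> 'e \<Rightarrow> 'z option) \<Rightarrow> 'z option \<Rightarrow> 'e option \<Rightarrow> 'z option" where
  "xi_ext xi z a = (case a of None \<Rightarrow> z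
                      | Some e \<Rightarrow> (case z of None \<Rightarrow> None | Some zz \<Rightarrow> xi zz e))"

fun mtrans :: "'e set \<Rightarrow> 'e set \<Rightarrow> ('x \<Rightarrow> 'e \<Rightarrow> 'x option) \<Rightarrow> ('z \<Rightarrow> 'e \<Rightarrow> 'z option) \<Rightarrow> 'e set
     \<Rightarrow> ('x, 'e, 'z) mstate \<Rightarrow> 'e mlabel \<Rightarrow> ('x, 'e, 'z) mstate option" where
  "mtrans So Suo d xi Sv (EnvS q qt z) (Ev e) =
     (if e \<in> Obs So Suo (aug d) qt (DeltaH xi z) then Some (AttS q qt z e) else None)"
| "mtrans So Suo d xi Sv (AttS q qt z e) (Hat a) =
     (if a \<in> Vset Sv e then
        (let \<gamma> = DeltaH xi z;
             q' = NX d a (UR Suo d \<gamma> q);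
             qt' = NX (aug d) (Some e) (UR Suo (aug d) \<gamma> qt);
             z' = (if q' \<noteq> {} then xi_ext xi z a else None)
         in Some (EnvS q' qt' z'))
      else None)"
| "mtrans So Suo d xi Sv _ _ = None"

definition mstep :: "'e set \<Rightarrow> 'e set \<Rightarrow> ('x \<Rightarrow> 'e \<Rightarrow> 'x option) \<Rightarrow> ('z \<Rightarrow> 'e \<Rightarrow> 'z option) \<Rightarrow> 'e set
     \<Rightarrow> ('x, 'e, 'z) mstate \<Rightarrow> ('x, 'e, 'z) mstate \<Rightarrow> bool" where
  "mstep So Suo d xi Sv s s' \<longleftrightarrow> (\<exists>l. mtrans So Suo d xi Sv s l = Some s')"

definition minit :: "'x set \<Rightarrow> 'z \<Rightarrow> ('x, 'e, 'z) mstate" where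
  "minit X0 z0 = EnvS X0 {(x, x) | x. x \<in> X0} (Some z0)"

definition env_state_of_M :: "'e set \<Rightarrow> 'e set \<Rightarrow> ('x \<Rightarrow> 'e \<Rightarrow> 'x option) \<Rightarrow> 'x set
     \<Rightarrow> ('z \<Rightarrow> 'e \<Rightarrow> 'z option) \<Rightarrow> 'z \<Rightarrow> 'e set \<Rightarrow> ('x, 'e, 'z) mstate \<Rightarrow> bool" where
  "env_state_of_M So Suo d X0 xi z0 Sv s \<longleftrightarrow>
     (mstep So Suo d xi Sv)\<^sup>*\<^sup>* (minit X0 z0) s \<and> (\<exists>q qt z. s = EnvS q qt z)"

definition negative_detected :: "'x set \<Rightarrow> ('x, 'e, 'z) mstate \<Rightarrow> bool" where
  "negative_detected Xsec s = (case s of EnvS q qt z \<Rightarrow> Iinit qt \<inter> Xsec = {} | _ \<Rightarrow> False)"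

definition undetectable :: "'e set \<Rightarrow> ('x \<Rightarrow> 'e \<Rightarrow> 'x option) \<Rightarrow> ('z \<Rightarrow> 'e \<Rightarrow> 'z option)
     \<Rightarrow> 'x set \<Rightarrow> ('x, 'e, 'z) mstate \<Rightarrow> bool" where
  "undetectable Suo d xi Xsec s = (case s of
     EnvS q qt z \<Rightarrow>
       Iinit qt \<inter> Xsec \<noteq> {} \<and>
       (\<forall>x0 x. (x0, x) \<in> UR Suo (aug d) (DeltaH xi z) qt \<longrightarrow> x0 \<in> Xsec \<longrightarrow>
          (\<exists>x0'. (x0', x) \<in> UR Suo (aug d) (DeltaH xi z) qt \<and> x0' \<notin> Xsec))
   | _ \<Rightarrow> False)"

end

theory Submission
  imports Defs
begin

text \<open>The estimate of the augmented system only ever evolves by \<open>UR\<close> and \<open>NX\<close>, which move the current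
  state of each pair and never touch its initial state. Hence the property ``every pair with a secret
  initial state has a twin with a non-secret initial state and the same current state'' is preserved
  along every transition of \<open>M\<close>, whatever the attacker and the supervisor do. An undetectable state
  has this property for its unobservable reach, so a later environment state is undetectable unless
  its estimate has lost all secret initial states, i.e.\ is negative detected. None of the
  well-formedness hypotheses on \<open>G\<close>, \<open>H\<close> or \<open>\<Sigma>\<^sub>v\<close> is needed.\<close>

definition secret_masked :: "'a set \<Rightarrow> ('a \<times> 'x) set \<Rightarrow> bool" where
  "secret_masked Xsec S \<longleftrightarrow>
     (\<forall>x0 x. (x0, x) \<in> S \<longrightarrow> x0 \<in> Xsec \<longrightarrow> (\<exists>x0'. (x0', x) \<in> S \<and> x0' \<notin> Xsec))"

lemma secret_masked_lift:
  assumes "secret_masked Xsec S"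
    and "\<And>a y. (a, y) \<in> T \<longleftrightarrow> (\<exists>x. (a, x) \<in> S \<and> y \<in> R x)"
  shows "secret_masked Xsec T"
  using assms unfolding secret_masked_def by metis

lemma dstar_aug: "dstar (aug d) (a, x) s = map_option (Pair a) (dstar d x s)"
  by (induction s arbitrary: x) (auto simp: aug_def split: option.splits)

lemma mem_UR_aug: "(a, y) \<in> UR Suo (aug d) \<gamma> S \<longleftrightarrow> (\<exists>x. (a, x) \<in> S \<and> y \<in> UR Suo d \<gamma> {x})"
  unfolding UR_def by (force simp: dstar_aug)

lemma mem_NX_aug: "(a, y) \<in> NX (aug d) e S \<longleftrightarrow> (\<exists>x. (a, x) \<in> S \<and> y \<in> NX d e {x})"
  unfolding NX_def by (force simp: aug_def split: option.splits)

lemma secret_masked_UR_aug: "secret_masked Xsec S \<Longrightarrow> secret_masked Xsec (UR Suo (aug d) \<gamma> S)"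
  by (rule secret_masked_lift[OF _ mem_UR_aug])

lemma secret_masked_NX_aug: "secret_masked Xsec S \<Longrightarrow> secret_masked Xsec (NX (aug d) e S)"
  by (rule secret_masked_lift[OF _ mem_NX_aug])

definition masked_estimate :: "'e set \<Rightarrow> ('x \<Rightarrow> 'e \<Rightarrow> 'x option) \<Rightarrow> ('z \<Rightarrow> 'e \<Rightarrow> 'z option)
    \<Rightarrow> 'x set \<Rightarrow> ('x, 'e, 'z) mstate \<Rightarrow> bool" where
  "masked_estimate Suo d xi Xsec s = (case s of
     EnvS q qt z \<Rightarrow> secret_masked Xsec (UR Suo (aug d) (DeltaH xi z) qt)
   | AttS q qt z e \<Rightarrow> secret_masked Xsec (UR Suo (aug d) (DeltaH xi z) qt))"

lemma mtrans_masked_estimate: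
  assumes "mtrans So Suo d xi Sv s l = Some s'" and "masked_estimate Suo d xi Xsec s"
  shows "masked_estimate Suo d xi Xsec s'"
proof (cases s)
  case EnvS
  with assms show ?thesis
    by (cases l) (auto simp: masked_estimate_def split: if_splits)
next
  case (AttS q qt z e)
  have "secret_masked Xsec (UR Suo (aug d) \<gamma> (NX (aug d) (Some e) (UR Suo (aug d) (DeltaH xi z) qt)))"
    for \<gamma>
    using assms(2) unfolding AttS masked_estimate_def
    by (simp add: secret_masked_UR_aug[OF secret_masked_NX_aug])
  with AttS assms(1) show ?thesis
    by (cases l) (auto simp: masked_estimate_def Let_def split: if_splits)
qed

lemma reachable_masked_estimate:
  assumes "(mstep So Suo d xi Sv)\<^sup>*\<^sup>* s s'" and "masked_estimate Suo d xi Xsec s"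
  shows "masked_estimate Suo d xi Xsec s'"
  using assms
  by (induction rule: rtranclp_induct) (auto simp: mstep_def intro: mtrans_masked_estimate)

lemma undetectable_EnvS_iff:
  "undetectable Suo d xi Xsec (EnvS q qt z) \<longleftrightarrow>
     Iinit qt \<inter> Xsec \<noteq> {} \<and> masked_estimate Suo d xi Xsec (EnvS q qt z)"
  by (simp add: undetectable_def masked_estimate_def secret_masked_def)

lemma undetectable_imp_masked_estimate:
  "undetectable Suo d xi Xsec s \<Longrightarrow> masked_estimate Suo d xi Xsec s"
  by (cases s) (simp_all add: undetectable_def masked_estimate_def secret_masked_def)

theorem proposition4:
  fixes X :: "'x set" and Sig So Suo Sv :: "'e set"
    and d :: "'x \<Rightarrow> 'e \<Rightarrow> 'x option" and X0 Xsec :: "'x set"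
    and Z :: "'z set" and xi :: "'z \<Rightarrow> 'e \<Rightarrow> 'z option" and z0 :: 'z
    and qe s :: "('x, 'e, 'z) mstate"
  assumes "plant X Sig d X0"
    and "Sig = So \<union> Suo" and "So \<inter> Suo = {}"
    and "supervisor_aut Z Sig Suo xi z0"
    and "Sv \<subseteq> So" and "Xsec \<subseteq> X0"
    and "env_state_of_M So Suo d X0 xi z0 Sv qe"
    and "undetectable Suo d xi Xsec qe"
    and "(mstep So Suo d xi Sv)\<^sup>*\<^sup>* qe s"
    and "env_state_of_M So Suo d X0 xi z0 Sv s"
  shows "undetectable Suo d xi Xsec s \<or> negative_detected Xsec s"
proof -
  obtain q qt z where s: "s = EnvS q qt z"
    using \<open>env_state_of_M So Suo d X0 xi z0 Sv s\<close> env_state_of_M_def by metis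
  have "masked_estimate Suo d xi Xsec qe"
    using \<open>undetectable Suo d xi Xsec qe\<close> by (rule undetectable_imp_masked_estimate)
  with \<open>(mstep So Suo d xi Sv)\<^sup>*\<^sup>* qe s\<close> have "masked_estimate Suo d xi Xsec s"
    by (rule reachable_masked_estimate)
  then show ?thesis
    by (simp add: s undetectable_EnvS_iff negative_detected_def)
qed

end
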